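(* Let $X$ be a compactum, let $n\geq2$, and let $f:X\to X$ be a function. Consider the statements: (1) $f$ is fully exact; (2) $F_n(f)$ is fully exact; (3) $SF_n(f)$ is fully exact. Then (2) and (3) are equivalent, and (2) implies (1).
   Context: A compactum is a nondegenerate compact, perfect, Hausdorff topological space. $F_n(X)$ is the set of nonempty subsets of $X$ with at most $n$ points, with the Vietoris topology; $F_1(X)=\{\{x\}:x\in X\}$; $F_n(f)(A)=f(A)$. $SF_n(X)=F_n(X)/F_1(X)$ is the quotient collapsing $F_1(X)$ to a point, $q$ the quotient map, $F_X=q(F_1(X))$, and $SF_n(f)(\chi)=q(F_n(f)(q^{-1}(\chi)))$ for $\chi\neq F_X$, $SF_n(f)(F_X)=F_X$. A function $g:Z\to Z$ is fully exact if for every pair of nonempty open $U,V\subseteq Z$ there is $k\in\mathbb{N}$ with $\mathrm{int}(g^k(U)\cap g^k(V))\neq\emptyset$. *)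

theory Defs
  imports "HOL-Analysis.Analysis"
begin

definition compactum :: "'a topology \<Rightarrow> bool" where
  "compactum X \<longleftrightarrow>
     (\<exists>x\<in>topspace X. \<exists>y\<in>topspace X. x \<noteq> y) \<and>
     compact_space X \<and>
     (\<forall>x\<in>topspace X. \<not> openin X {x}) \<and>
     Hausdorff_space X"

definition Fn_set :: "'a topology \<Rightarrow> nat \<Rightarrow> 'a set set" where
  "Fn_set X n = {A. A \<subseteq> topspace X \<and> A \<noteq> {} \<and> finite A \<and> card A \<le> n}"

definition F1_set :: "'a topology \<Rightarrow> 'a set set" where
  "F1_set X = {{x} | x. x \<in> topspace X}"

text \<open>Vietoris topology on F_n(X): generated by the subbase
  <U> = {A. A \<subseteq> U} and [U] = {A. A \<inter> U \<noteq> {}} for U open in X,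
  restricted to F_n(X).\<close>
definition Fn_top :: "'a topology \<Rightarrow> nat \<Rightarrow> 'a set topology" where
  "Fn_top X n = subtopology
     (topology_generated_by
        ({{A. A \<subseteq> U} | U. openin X U} \<union> {{A. A \<inter> U \<noteq> {}} | U. openin X U}))
     (Fn_set X n)"

definition Fn_map :: "('a \<Rightarrow> 'a) \<Rightarrow> 'a set \<Rightarrow> 'a set" where
  "Fn_map f A = f ` A"

definition quotient_top :: "'a topology \<Rightarrow> ('a \<Rightarrow> 'b) \<Rightarrow> 'b topology" where
  "quotient_top T q = topology (\<lambda>V. V \<subseteq> q ` topspace T \<and> openin T {x \<in> topspace T. q x \<in> V})"

text \<open>The quotient map q : F_n(X) \<rightarrow> SF_n(X) collapsing F_1(X) to one point.
  Points of SF_n(X) are the equivalence classes: F_1(X) itself, and singletons {A} for A not in F_1(X).\<close>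
definition SF_q :: "'a topology \<Rightarrow> 'a set \<Rightarrow> 'a set set" where
  "SF_q X A = (if A \<in> F1_set X then F1_set X else {A})"

definition SF_top :: "'a topology \<Rightarrow> nat \<Rightarrow> 'a set set topology" where
  "SF_top X n = quotient_top (Fn_top X n) (SF_q X)"

definition SF_point :: "'a topology \<Rightarrow> 'a set set" where
  "SF_point X = F1_set X"

definition SF_map :: "'a topology \<Rightarrow> nat \<Rightarrow> ('a \<Rightarrow> 'a) \<Rightarrow> 'a set set \<Rightarrow> 'a set set" where
  "SF_map X n f c =
     (if c = SF_point X then SF_point X
      else SF_q X (Fn_map f (THE A. A \<in> Fn_set X n \<and> SF_q X A = c)))"

definition fully_exact :: "'b topology \<Rightarrow> ('b \<Rightarrow> 'b) \<Rightarrow> bool" where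
  "fully_exact Z g \<longleftrightarrow>
     (\<forall>U V. openin Z U \<and> U \<noteq> {} \<and> openin Z V \<and> V \<noteq> {} \<longrightarrow>
        (\<exists>k\<ge>1. Z interior_of ((g ^^ k) ` U \<inter> (g ^^ k) ` V) \<noteq> {}))"

end

theory Submission
  imports Defs
begin

text \<open>Every open set \<open>W\<close> of \<open>F\<^sub>n(X)\<close> contains, with a set \<open>A\<close> and a point \<open>a \<in> A\<close>, all sets
  obtained by replacing \<open>a\<close> with points near \<open>a\<close>, as long as at most \<open>n\<close> points result.
  Hence \<open>\<Union>W\<close> contains an open set of \<open>X\<close>; applied to \<open>W \<subseteq> F\<^sub>n(f)\<^sup>k\<langle>U\<rangle> \<inter> F\<^sub>n(f)\<^sup>k\<langle>V\<rangle>\<close> this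
  shows that \<open>F\<^sub>n(f)\<close> fully exact implies \<open>f\<close> fully exact.  The same replacement shows that in
  a perfect space with \<open>n \<ge> 2\<close> the closed set \<open>F\<^sub>1(X)\<close> has empty interior in \<open>F\<^sub>n(X)\<close>.  The
  quotient map onto \<open>SF\<^sub>n(X)\<close> is injective and open on the complement of \<open>F\<^sub>1(X)\<close> and
  semiconjugates \<open>F\<^sub>n(f)\<close> to \<open>SF\<^sub>n(f)\<close>, so full exactness of either system can be tested
  on open sets avoiding \<open>F\<^sub>1(X)\<close>, where the two systems coincide.\<close>

lemma interior_of_nonempty_iff: "Z interior_of S \<noteq> {} \<longleftrightarrow> (\<exists>W. openin Z W \<and> W \<noteq> {} \<and> W \<subseteq> S)"
  by (auto simp: interior_of_eq_empty)

lemma fully_exactI: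
  assumes "\<And>U V. openin Z U \<Longrightarrow> U \<noteq> {} \<Longrightarrow> openin Z V \<Longrightarrow> V \<noteq> {} \<Longrightarrow>
     \<exists>k\<ge>1. \<exists>W. openin Z W \<and> W \<noteq> {} \<and> W \<subseteq> (g ^^ k) ` U \<inter> (g ^^ k) ` V"
  shows "fully_exact Z g"
  using assms by (simp add: fully_exact_def interior_of_nonempty_iff)

lemma fully_exactE:
  assumes "fully_exact Z g" "openin Z U" "U \<noteq> {}" "openin Z V" "V \<noteq> {}"
  obtains k W where "k \<ge> 1" "openin Z W" "W \<noteq> {}" "W \<subseteq> (g ^^ k) ` U \<inter> (g ^^ k) ` V"
  using assms unfolding fully_exact_def interior_of_nonempty_iff by meson

section \<open>Quotient topologies and semiconjugacies\<close>

lemma openin_quotient_top: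
  "openin (quotient_top T q) V \<longleftrightarrow> V \<subseteq> q ` topspace T \<and> openin T {x \<in> topspace T. q x \<in> V}"
proof -
  have preimage_Int: "{x \<in> topspace T. q x \<in> S \<inter> S'} =
      {x \<in> topspace T. q x \<in> S} \<inter> {x \<in> topspace T. q x \<in> S'}" for S S'
    by blast
  have preimage_Union: "{x \<in> topspace T. q x \<in> \<Union>K} =
      (\<Union>S\<in>K. {x \<in> topspace T. q x \<in> S})" for K
    by blast
  have "istopology (\<lambda>V. V \<subseteq> q ` topspace T \<and> openin T {x \<in> topspace T. q x \<in> V})"
    unfolding istopology_def preimage_Int preimage_Union by blast
  then show ?thesis
    unfolding quotient_top_def by simp
qed

lemma topspace_quotient_top: "topspace (quotient_top T q) = q ` topspace T"
proof (rule antisym)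
  show "topspace (quotient_top T q) \<subseteq> q ` topspace T"
    by (auto simp: topspace_def openin_quotient_top)
  have "{x \<in> topspace T. q x \<in> q ` topspace T} = topspace T"
    by blast
  then have "openin (quotient_top T q) (q ` topspace T)"
    by (simp add: openin_quotient_top)
  then show "q ` topspace T \<subseteq> topspace (quotient_top T q)"
    by (rule openin_subset)
qed

lemma quotient_map_quotient_top: "quotient_map T (quotient_top T q) q"
  by (simp add: quotient_map_def topspace_quotient_top openin_quotient_top)

lemma funpow_semiconj:
  assumes "g ` S \<subseteq> S" "\<And>x. x \<in> S \<Longrightarrow> p (g x) = g' (p x)" "x \<in> S"
  shows "(g ^^ k) x \<in> S \<and> p ((g ^^ k) x) = (g' ^^ k) (p x)"
  by (induction k) (use assms in auto)

lemma image_funpow_semiconj: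
  assumes "g ` S \<subseteq> S" "\<And>x. x \<in> S \<Longrightarrow> p (g x) = g' (p x)" "U \<subseteq> S"
  shows "p ` (g ^^ k) ` U = (g' ^^ k) ` p ` U"
  using funpow_semiconj[of g S p g' _ k] assms by (force simp: image_iff)

locale collapsing_quotient =
  fixes Z :: "'a topology" and Z' :: "'b topology" and p :: "'a \<Rightarrow> 'b" and C :: "'a set"
  assumes quotient: "quotient_map Z Z' p"
    and closedin_C: "closedin Z C"
    and interior_of_C_empty: "Z interior_of C = {}"
    and injective_off_C: "\<And>x y. x \<in> topspace Z \<Longrightarrow> y \<in> topspace Z - C \<Longrightarrow> p x = p y \<Longrightarrow> x = y"
begin

lemma openin_Diff_C:
  assumes "openin Z W" "W \<noteq> {}"
  shows "openin Z (W - C)" "W - C \<noteq> {}"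
  using assms closedin_C interior_of_C_empty by (auto simp: interior_of_eq_empty_alt)

lemma openin_image:
  assumes "openin Z W" "W \<inter> C = {}"
  shows "openin Z' (p ` W)"
proof -
  have "{x \<in> topspace Z. p x \<in> p ` W} \<subseteq> W"
    using injective_off_C assms openin_subset[OF assms(1)] by blast
  then show ?thesis
    using quotient assms(1) unfolding quotient_map_saturated_open by blast
qed

lemma openin_preimage:
  assumes "openin Z' W'" "W' \<noteq> {}"
  shows "openin Z {x \<in> topspace Z. p x \<in> W'}" "p ` {x \<in> topspace Z. p x \<in> W'} = W'"
  using assms quotient openin_subset[OF assms(1)]
  by (auto simp: quotient_map_def)

context
  fixes g :: "'a \<Rightarrow> 'a" and g' :: "'b \<Rightarrow> 'b"
  assumes g: "g ` topspace Z \<subseteq> topspace Z"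
    and semiconj: "\<And>x. x \<in> topspace Z \<Longrightarrow> p (g x) = g' (p x)"
begin

lemma image_funpow_commute: "S \<subseteq> topspace Z \<Longrightarrow> p ` (g ^^ k) ` S = (g' ^^ k) ` p ` S"
  using image_funpow_semiconj[of g "topspace Z" p g' S k] g semiconj by blast

lemma fully_exact_imp_fully_exact_quotient:
  assumes exact: "fully_exact Z g"
  shows "fully_exact Z' g'"
proof (rule fully_exactI)
  fix U' V' assume U': "openin Z' U'" "U' \<noteq> {}" and V': "openin Z' V'" "V' \<noteq> {}"
  note U = openin_preimage[OF U'] and V = openin_preimage[OF V']
  let ?U = "{x \<in> topspace Z. p x \<in> U'}" and ?V = "{x \<in> topspace Z. p x \<in> V'}"
  have U_ne: "?U \<noteq> {}" and V_ne: "?V \<noteq> {}"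
    using U(2) V(2) U'(2) V'(2) by auto
  obtain k W where k: "k \<ge> 1" and W: "openin Z W" "W \<noteq> {}"
      and W_sub: "W \<subseteq> (g ^^ k) ` ?U \<inter> (g ^^ k) ` ?V"
    by (rule fully_exactE[OF exact U(1) U_ne V(1) V_ne])
  have W'_open: "openin Z' (p ` (W - C))"
    by (rule openin_image[OF openin_Diff_C(1)[OF W]]) blast
  have W'_ne: "p ` (W - C) \<noteq> {}"
    using openin_Diff_C(2)[OF W] by blast
  have "p ` (W - C) \<subseteq> p ` (g ^^ k) ` ?U \<inter> p ` (g ^^ k) ` ?V"
    using W_sub by blast
  also have "\<dots> = (g' ^^ k) ` U' \<inter> (g' ^^ k) ` V'"
    using image_funpow_commute[of ?U k] image_funpow_commute[of ?V k] U(2) V(2) by simp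
  finally show "\<exists>k\<ge>1. \<exists>W'. openin Z' W' \<and> W' \<noteq> {} \<and> W' \<subseteq> (g' ^^ k) ` U' \<inter> (g' ^^ k) ` V'"
    using k W'_open W'_ne by blast
qed

lemma lift_through_funpow:
  assumes "B \<in> topspace Z - C" "S \<subseteq> topspace Z" "p B \<in> (g' ^^ k) ` p ` S"
  shows "B \<in> (g ^^ k) ` S"
proof -
  have "p B \<in> p ` (g ^^ k) ` S"
    using assms(3) image_funpow_commute[OF assms(2)] by simp
  then obtain D where D: "p B = p D" "D \<in> (g ^^ k) ` S"
    by (rule imageE)
  have "D \<in> topspace Z"
    using D(2) assms(2) funpow_semiconj[of g "topspace Z" p g' _ k] g semiconj by blast
  then show ?thesis
    using injective_off_C[OF _ assms(1) D(1)[symmetric]] D(2) by simp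
qed

lemma fully_exact_quotient_imp_fully_exact:
  assumes exact: "fully_exact Z' g'"
  shows "fully_exact Z g"
proof (rule fully_exactI)
  fix U V assume U: "openin Z U" "U \<noteq> {}" and V: "openin Z V" "V \<noteq> {}"
  have U_top: "U - C \<subseteq> topspace Z" and V_top: "V - C \<subseteq> topspace Z"
    using U(1) V(1) openin_subset by blast+
  have U'_open: "openin Z' (p ` (U - C))" and V'_open: "openin Z' (p ` (V - C))"
    using openin_image openin_Diff_C(1) U V by blast+
  have U'_ne: "p ` (U - C) \<noteq> {}" and V'_ne: "p ` (V - C) \<noteq> {}"
    using openin_Diff_C(2) U V by blast+
  obtain k W' where k: "k \<ge> 1" and W': "openin Z' W'" "W' \<noteq> {}"
      and W'_sub: "W' \<subseteq> (g' ^^ k) ` p ` (U - C) \<inter> (g' ^^ k) ` p ` (V - C)"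
    by (rule fully_exactE[OF exact U'_open U'_ne V'_open V'_ne])
  let ?W = "{x \<in> topspace Z. p x \<in> W'} - C"
  have "{x \<in> topspace Z. p x \<in> W'} \<noteq> {}"
    using openin_preimage(2)[OF W'] W'(2) by auto
  note W = openin_Diff_C[OF openin_preimage(1)[OF W'] this]
  have "?W \<subseteq> (g ^^ k) ` U \<inter> (g ^^ k) ` V"
  proof
    fix B assume "B \<in> ?W"
    then have B: "B \<in> topspace Z - C" "p B \<in> W'"
      by auto
    have "B \<in> (g ^^ k) ` (U - C)"
      by (rule lift_through_funpow[OF B(1) U_top]) (use B(2) W'_sub in blast)
    moreover have "B \<in> (g ^^ k) ` (V - C)"
      by (rule lift_through_funpow[OF B(1) V_top]) (use B(2) W'_sub in blast)
    ultimately show "B \<in> (g ^^ k) ` U \<inter> (g ^^ k) ` V"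
      by blast
  qed
  then show "\<exists>k\<ge>1. \<exists>W. openin Z W \<and> W \<noteq> {} \<and> W \<subseteq> (g ^^ k) ` U \<inter> (g ^^ k) ` V"
    using k W(1,2) by auto
qed

lemma fully_exact_iff_fully_exact_quotient: "fully_exact Z g \<longleftrightarrow> fully_exact Z' g'"
  by (rule iffI[OF fully_exact_imp_fully_exact_quotient fully_exact_quotient_imp_fully_exact])

end

end

section \<open>The Vietoris topology on \<open>F\<^sub>n(X)\<close>\<close>

abbreviation vietoris_subbase :: "'a topology \<Rightarrow> 'a set set set" where
  "vietoris_subbase X \<equiv> {{A. A \<subseteq> U} | U. openin X U} \<union> {{A. A \<inter> U \<noteq> {}} | U. openin X U}"

lemma topspace_Fn_top: "topspace (Fn_top X n) = Fn_set X n"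
proof -
  have "{A. A \<subseteq> topspace X} \<in> vietoris_subbase X"
    by blast
  then have "Fn_set X n \<subseteq> \<Union>(vietoris_subbase X)"
    unfolding Fn_set_def by blast
  then show ?thesis
    unfolding Fn_top_def topspace_subtopology topology_generated_by_topspace by (rule Int_absorb1)
qed

lemma openin_Fn_top:
  "openin (Fn_top X n) W \<longleftrightarrow> (\<exists>s. generate_topology_on (vietoris_subbase X) s \<and> W = s \<inter> Fn_set X n)"
  unfolding Fn_top_def openin_subtopology openin_topology_generated_by_iff ..

lemma openin_Fn_top_subbase:
  assumes "s \<in> vietoris_subbase X"
  shows "openin (Fn_top X n) (s \<inter> Fn_set X n)"
  unfolding openin_Fn_top by (intro exI[of _ s] conjI generate_topology_on.Basis assms refl)

lemma generate_topology_on_vietoris_replace_point: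
  assumes "generate_topology_on (vietoris_subbase X) s" "A \<in> s" "a \<in> A" "a \<in> topspace X"
  shows "\<exists>G. openin X G \<and> a \<in> G \<and> (\<forall>Y. Y \<subseteq> G \<and> Y \<noteq> {} \<longrightarrow> (A - {a}) \<union> Y \<in> s)"
  using assms(1-3)
proof (induction arbitrary: A)
  case Empty
  then show ?case by simp
next
  case (Int s1 s2)
  obtain G1 where G1: "openin X G1" "a \<in> G1" "\<forall>Y. Y \<subseteq> G1 \<and> Y \<noteq> {} \<longrightarrow> (A - {a}) \<union> Y \<in> s1"
    using Int.IH(1)[of A] Int.prems by auto
  obtain G2 where G2: "openin X G2" "a \<in> G2" "\<forall>Y. Y \<subseteq> G2 \<and> Y \<noteq> {} \<longrightarrow> (A - {a}) \<union> Y \<in> s2"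
    using Int.IH(2)[of A] Int.prems by auto
  have "\<forall>Y. Y \<subseteq> G1 \<inter> G2 \<and> Y \<noteq> {} \<longrightarrow> (A - {a}) \<union> Y \<in> s1 \<inter> s2"
    using G1(3) G2(3) by simp
  then show ?case
    using G1(1,2) G2(1,2) by blast
next
  case (UN K)
  then obtain s where s: "s \<in> K" "A \<in> s"
    by blast
  then obtain G where "openin X G" "a \<in> G" "\<forall>Y. Y \<subseteq> G \<and> Y \<noteq> {} \<longrightarrow> (A - {a}) \<union> Y \<in> s"
    using UN.IH[OF s UN.prems(2)] by auto
  then show ?case
    using s(1) by blast
next
  case (Basis s)
  then obtain U where U: "openin X U" and s: "s = {B. B \<subseteq> U} \<or> s = {B. B \<inter> U \<noteq> {}}"
    by blast
  show ?case
  proof (cases "s = {B. B \<inter> U \<noteq> {}} \<and> (A - {a}) \<inter> U \<noteq> {}")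
    case True
    then have "\<forall>Y. Y \<subseteq> topspace X \<and> Y \<noteq> {} \<longrightarrow> (A - {a}) \<union> Y \<in> s"
      by auto
    then show ?thesis
      using assms(4) by blast
  next
    case False
    then have "a \<in> U" "\<forall>Y. Y \<subseteq> U \<and> Y \<noteq> {} \<longrightarrow> (A - {a}) \<union> Y \<in> s"
      using s Basis.prems by auto
    then show ?thesis
      using U by blast
  qed
qed

lemma openin_Fn_top_replace_point:
  assumes "openin (Fn_top X n) W" "A \<in> W" "a \<in> A"
  obtains G where "openin X G" "a \<in> G"
    "\<And>Y. Y \<subseteq> G \<Longrightarrow> Y \<noteq> {} \<Longrightarrow> (A - {a}) \<union> Y \<in> Fn_set X n \<Longrightarrow> (A - {a}) \<union> Y \<in> W"
proof -
  obtain s where s: "generate_topology_on (vietoris_subbase X) s" "W = s \<inter> Fn_set X n"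
    using assms(1) openin_Fn_top by blast
  have "A \<in> s" "a \<in> topspace X"
    using assms(2,3) s(2) by (auto simp: Fn_set_def)
  then obtain G where G: "openin X G" "a \<in> G" "\<forall>Y. Y \<subseteq> G \<and> Y \<noteq> {} \<longrightarrow> (A - {a}) \<union> Y \<in> s"
    using generate_topology_on_vietoris_replace_point[OF s(1) _ assms(3)] by blast
  show ?thesis
    by (rule that[OF G(1,2)]) (use G(3) s(2) in blast)
qed

lemma F1_set_subset_Fn_set: "n \<ge> 1 \<Longrightarrow> F1_set X \<subseteq> Fn_set X n"
  by (auto simp: F1_set_def Fn_set_def)

lemma insert_Diff_in_Fn_set:
  assumes "A \<in> Fn_set X n" "a \<in> A" "y \<in> topspace X"
  shows "insert y (A - {a}) \<in> Fn_set X n"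
proof -
  have "finite A" "card A \<le> n"
    using assms(1) by (auto simp: Fn_set_def)
  then have "card (insert y (A - {a})) \<le> n"
    using card_Suc_Diff1[OF \<open>finite A\<close> assms(2)] by (simp add: card_insert_if)
  then show ?thesis
    using assms by (auto simp: Fn_set_def)
qed

lemma closedin_F1_set:
  assumes "Hausdorff_space X" "n \<ge> 1"
  shows "closedin (Fn_top X n) (F1_set X)"
  unfolding closedin_def topspace_Fn_top
proof
  show "F1_set X \<subseteq> Fn_set X n"
    using F1_set_subset_Fn_set[OF assms(2)] .
  show "openin (Fn_top X n) (Fn_set X n - F1_set X)"
  proof (subst openin_subopen, intro ballI)
    fix A assume A: "A \<in> Fn_set X n - F1_set X"
    then obtain a where a: "a \<in> A" "a \<in> topspace X"
      by (auto simp: Fn_set_def)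
    moreover have "A \<noteq> {a}"
      using A a(2) by (auto simp: F1_set_def)
    ultimately obtain b where b: "b \<in> A" "b \<noteq> a" "b \<in> topspace X"
      using A by (auto simp: Fn_set_def)
    obtain Ua Ub where U: "openin X Ua" "openin X Ub" "a \<in> Ua" "b \<in> Ub" "disjnt Ua Ub"
      using assms(1) a(2) b unfolding Hausdorff_space_def by metis
    let ?T = "({B. B \<inter> Ua \<noteq> {}} \<inter> Fn_set X n) \<inter> ({B. B \<inter> Ub \<noteq> {}} \<inter> Fn_set X n)"
    have "openin (Fn_top X n) ?T"
      by (intro openin_Int openin_Fn_top_subbase) (use U(1,2) in blast)+
    moreover have "A \<in> ?T"
      using A a(1) b(1) U(3,4) by blast
    moreover have "?T \<subseteq> Fn_set X n - F1_set X"
      using U(5) by (auto simp: F1_set_def disjnt_def)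
    ultimately show "\<exists>T. openin (Fn_top X n) T \<and> A \<in> T \<and> T \<subseteq> Fn_set X n - F1_set X"
      by blast
  qed
qed

lemma interior_of_F1_set:
  assumes "\<forall>x\<in>topspace X. \<not> openin X {x}" "n \<ge> 2"
  shows "Fn_top X n interior_of F1_set X = {}"
  unfolding interior_of_eq_empty
proof (intro allI impI)
  fix W assume W: "openin (Fn_top X n) W \<and> W \<subseteq> F1_set X"
  show "W = {}"
  proof (rule ccontr)
    assume "W \<noteq> {}"
    then obtain a where a: "{a} \<in> W" "a \<in> topspace X"
      using W by (auto simp: F1_set_def)
    obtain G where G: "openin X G" "a \<in> G"
        and G_W: "\<And>Y. Y \<subseteq> G \<Longrightarrow> Y \<noteq> {} \<Longrightarrow> ({a} - {a}) \<union> Y \<in> Fn_set X n \<Longrightarrow> ({a} - {a}) \<union> Y \<in> W"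
      using openin_Fn_top_replace_point[of X n W "{a}" a] W a(1) by blast
    have "G \<noteq> {a}"
      using assms(1) a(2) G(1) by blast
    then obtain y where y: "y \<in> G" "y \<noteq> a"
      using G(2) by blast
    have "{a, y} \<in> Fn_set X n"
      using assms(2) a(2) y openin_subset[OF G(1)] by (auto simp: Fn_set_def card_insert_if)
    then have "{a, y} \<in> W"
      using G_W[of "{a, y}"] G(2) y(1) by simp
    moreover have "{a, y} \<notin> F1_set X"
      using y(2) by (auto simp: F1_set_def doubleton_eq_iff)
    ultimately show False
      using W by blast
  qed
qed

lemma interior_of_Union_openin_Fn_top:
  assumes "openin (Fn_top X n) W" "W \<noteq> {}"
  shows "X interior_of \<Union>W \<noteq> {}"
proof -
  have W_Fn: "W \<subseteq> Fn_set X n"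
    using openin_subset[OF assms(1)] by (simp add: topspace_Fn_top)
  then obtain A a where A: "A \<in> W" and a: "a \<in> A"
    using assms(2) by (force simp: Fn_set_def)
  obtain G where G: "openin X G" "a \<in> G"
      and G_W: "\<And>Y. Y \<subseteq> G \<Longrightarrow> Y \<noteq> {} \<Longrightarrow> (A - {a}) \<union> Y \<in> Fn_set X n \<Longrightarrow> (A - {a}) \<union> Y \<in> W"
    using openin_Fn_top_replace_point[OF assms(1) A a] by blast
  have "G \<subseteq> \<Union>W"
  proof
    fix y assume y: "y \<in> G"
    then have "y \<in> topspace X"
      using openin_subset[OF G(1)] by blast
    with A W_Fn have "insert y (A - {a}) \<in> Fn_set X n"
      using insert_Diff_in_Fn_set[OF _ a] by blast
    then have "insert y (A - {a}) \<in> W"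
      using G_W[of "{y}"] y by simp
    then show "y \<in> \<Union>W"
      by (rule UnionI[OF _ insertI1])
  qed
  then show ?thesis
    unfolding interior_of_nonempty_iff using G(1,2) by blast
qed

section \<open>Induced maps\<close>

lemma Fn_map_in_Fn_set: "f ` topspace X \<subseteq> topspace X \<Longrightarrow> A \<in> Fn_set X n \<Longrightarrow> Fn_map f A \<in> Fn_set X n"
  using card_image_le[of A f] by (auto simp: Fn_set_def Fn_map_def)

lemma funpow_Fn_map: "Fn_map f ^^ k = Fn_map (f ^^ k)"
  by (induction k) (simp_all add: fun_eq_iff Fn_map_def image_comp)

lemma Union_Fn_map_subsets: "\<Union>(Fn_map h ` ({A. A \<subseteq> S} \<inter> Fn_set X n)) \<subseteq> h ` S"
  by (auto simp: Fn_map_def)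

lemma fully_exact_Fn_map_imp_fully_exact:
  assumes "n \<ge> 1" "fully_exact (Fn_top X n) (Fn_map f)"
  shows "fully_exact X f"
proof (rule fully_exactI)
  fix U V assume U: "openin X U" "U \<noteq> {}" and V: "openin X V" "V \<noteq> {}"
  let ?U = "{A. A \<subseteq> U} \<inter> Fn_set X n" and ?V = "{A. A \<subseteq> V} \<inter> Fn_set X n"
  have U_open: "openin (Fn_top X n) ?U" and V_open: "openin (Fn_top X n) ?V"
    by (rule openin_Fn_top_subbase, use U(1) V(1) in blast)+
  have "{u} \<in> ?U" "{v} \<in> ?V" if "u \<in> U" "v \<in> V" for u v
    using that openin_subset[OF U(1)] openin_subset[OF V(1)] assms(1)
    by (auto simp: Fn_set_def)
  then have U_ne: "?U \<noteq> {}" and V_ne: "?V \<noteq> {}"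
    using U(2) V(2) by blast+
  obtain k W where k: "k \<ge> 1" and W: "openin (Fn_top X n) W" "W \<noteq> {}"
      and W_sub: "W \<subseteq> (Fn_map f ^^ k) ` ?U \<inter> (Fn_map f ^^ k) ` ?V"
    by (rule fully_exactE[OF assms(2) U_open U_ne V_open V_ne])
  obtain G where G: "openin X G" "G \<noteq> {}" "G \<subseteq> \<Union>W"
    using interior_of_Union_openin_Fn_top[OF W] unfolding interior_of_nonempty_iff by blast
  have Union_W: "\<Union>W \<subseteq> (f ^^ k) ` S" if "W \<subseteq> Fn_map (f ^^ k) ` ({A. A \<subseteq> S} \<inter> Fn_set X n)" for S
    using Union_mono[OF that] Union_Fn_map_subsets by (rule order_trans)
  have "\<Union>W \<subseteq> (f ^^ k) ` U" "\<Union>W \<subseteq> (f ^^ k) ` V"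
    by (rule Union_W, use W_sub in \<open>simp add: funpow_Fn_map\<close>)+
  with G(3) have "G \<subseteq> (f ^^ k) ` U \<inter> (f ^^ k) ` V"
    by blast
  then show "\<exists>k\<ge>1. \<exists>W. openin X W \<and> W \<noteq> {} \<and> W \<subseteq> (f ^^ k) ` U \<inter> (f ^^ k) ` V"
    using k G(1,2) by blast
qed

lemma SF_q_injective: "B \<notin> F1_set X \<Longrightarrow> SF_q X A = SF_q X B \<Longrightarrow> A = B"
  by (auto simp: SF_q_def split: if_splits)

lemma SF_map_SF_q:
  assumes "f ` topspace X \<subseteq> topspace X" "A \<in> Fn_set X n"
  shows "SF_map X n f (SF_q X A) = SF_q X (Fn_map f A)"
proof (cases "A \<in> F1_set X")
  case True
  then have "Fn_map f A \<in> F1_set X"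
    using assms(1) by (auto simp: F1_set_def Fn_map_def)
  then show ?thesis
    using True by (simp add: SF_map_def SF_q_def SF_point_def)
next
  case False
  have "(THE B. B \<in> Fn_set X n \<and> SF_q X B = SF_q X A) = A"
    by (rule the_equality) (use assms(2) SF_q_injective[OF False] in auto)
  moreover have "SF_q X A \<noteq> SF_point X"
    using False by (auto simp: SF_q_def SF_point_def)
  ultimately show ?thesis
    by (simp add: SF_map_def)
qed

lemma collapsing_quotient_SF:
  assumes "Hausdorff_space X" "\<forall>x\<in>topspace X. \<not> openin X {x}" "n \<ge> 2"
  shows "collapsing_quotient (Fn_top X n) (SF_top X n) (SF_q X) (F1_set X)"
proof (rule collapsing_quotient.intro)
  show "quotient_map (Fn_top X n) (SF_top X n) (SF_q X)"
    unfolding SF_top_def by (rule quotient_map_quotient_top)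
  show "closedin (Fn_top X n) (F1_set X)"
    using closedin_F1_set[OF assms(1)] assms(3) by simp
  show "Fn_top X n interior_of F1_set X = {}"
    using interior_of_F1_set[OF assms(2,3)] .
  show "A = B" if "B \<in> topspace (Fn_top X n) - F1_set X" "SF_q X A = SF_q X B" for A B
    using SF_q_injective that by blast
qed

theorem theorem23:
  fixes X :: "'a topology" and n :: nat and f :: "'a \<Rightarrow> 'a"
  assumes "compactum X" and "n \<ge> 2" and "f ` topspace X \<subseteq> topspace X"
  shows "(fully_exact (Fn_top X n) (Fn_map f) \<longleftrightarrow> fully_exact (SF_top X n) (SF_map X n f))
       \<and> (fully_exact (Fn_top X n) (Fn_map f) \<longrightarrow> fully_exact X f)"
proof
  have "Hausdorff_space X" "\<forall>x\<in>topspace X. \<not> openin X {x}"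
    using assms(1) by (auto simp: compactum_def)
  then interpret collapsing_quotient "Fn_top X n" "SF_top X n" "SF_q X" "F1_set X"
    using assms(2) by (rule collapsing_quotient_SF)
  show "fully_exact (Fn_top X n) (Fn_map f) \<longleftrightarrow> fully_exact (SF_top X n) (SF_map X n f)"
    by (rule fully_exact_iff_fully_exact_quotient)
      (use assms(3) in \<open>auto simp: topspace_Fn_top Fn_map_in_Fn_set SF_map_SF_q\<close>)
  show "fully_exact (Fn_top X n) (Fn_map f) \<longrightarrow> fully_exact X f"
    using fully_exact_Fn_map_imp_fully_exact[of n X f] assms(2) by simp
qed

end
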